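(* Let $U\ge 1$ and $k\ge U$ be integers with $k$ a multiple of $U$. Let $(n(i))_{i\ge 0}$ be defined by: - $n(0)=1$; - $n(i)=\sum_{m=0}^{i-1}n(m)$ for $1\le i\le U$; - $n(i)=\sum_{m=1}^{i-1}n(m)$ for $U<i\le k$; - $n(i)=\sum_{m=i-k}^{i-1}n(m)$ for $i>k$. (This recurrence counts the peers newly reached at delay $i$ in the multiple-unbalanced-tree chunk distribution.) Then for all integers $i\ge 1$, $$n(i)=\sum_{j=1}^{U}F_k(i-j+1),$$ and consequently, for every integer $t\ge 0$, $$\sum_{i=1}^{t}n(i)=\sum_{j=1}^{U}S_k(t-j+1)=\overline{N}(t).$$
   Context: $F_k(i)=0$ for $i\le 0$, $F_k(1)=1$, and $F_k(i)=\sum_{j=1}^k F_k(i-j)$ for $i>1$ (the $k$-step Fibonacci sequence). $S_k(n)=0$ for $n\le 0$ and $S_k(n)=\sum_{i=1}^n F_k(i)$ for $n>0$. $\overline{N}(t)=\sum_{j=1}^{U}S_k(t-j+1)$ is the upper bound on the stream diffusion metric for chunk-based streaming with normalized upload capacity $U$ and at most $k$ neighbors per node. *)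

theory Defs
  imports Main
begin

fun Fnat :: "nat \<Rightarrow> nat \<Rightarrow> nat" where
  "Fnat k 0 = 0"
| "Fnat k (Suc 0) = 1"
| "Fnat k (Suc (Suc m)) = (\<Sum>j\<in>{1..k}. if j \<le> Suc (Suc m) then Fnat k (Suc (Suc m) - j) else 0)"

definition F :: "nat \<Rightarrow> int \<Rightarrow> nat" where
  "F k i = (if i \<le> 0 then 0 else Fnat k (nat i))"

definition S :: "nat \<Rightarrow> int \<Rightarrow> nat" where
  "S k n = (if n \<le> 0 then 0 else (\<Sum>i\<in>{1..n}. F k i))"

definition Nbar :: "nat \<Rightarrow> nat \<Rightarrow> int \<Rightarrow> nat" where
  "Nbar k U t = (\<Sum>j\<in>{1..int U}. S k (t - j + 1))"

end

theory Submission
  imports Defs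
begin

(* Put G(i) = sum_{j=1}^U F_k(i-j+1), the superposition of U shifted
   copies of the k-step Fibonacci sequence.  Extended by 0 to all integers, F_k obeys
   F_k(m) = [m = 1] + sum_{l=1}^k F_k(m-l), hence G obeys
   G(i) = [1 <= i <= U] + sum_{l=1}^k G(i-l), and since G vanishes at i <= 0 this is the
   windowed recurrence  G(i) = [i <= U] + sum_{m = max 1 (i-k)}^{i-1} G(m)  for i >= 1.
   Because k >= U, the three-case recurrence defining n(i) collapses to the same windowed
   recurrence (the term n(0) = 1 plays the role of the indicator for i <= U).  A windowed
   recurrence determines its solution on i >= 1, so n(i) = G(i).  The second claim then
   follows by summing over i and using that partial sums of shifted copies of F_k are
   shifted copies of S_k; the last equation is the definition of Nbar. *)

lemma F_nonpos: "x \<le> 0 \<Longrightarrow> F k x = 0"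
  by (simp add: F_def)

lemma sum_atLeastAtMost_int:
  "(\<Sum>l\<in>{1..int k}. f l) = (\<Sum>j\<in>{1..k}. f (int j))"
proof -
  have "{1..int k} = int ` {1..k}" by (simp add: image_int_atLeastAtMost)
  then show ?thesis by (simp add: sum.reindex)
qed

text \<open>The recurrence of F_k holds at every integer, once the initial value is encoded
  as a unit impulse at 1.\<close>
lemma F_rec: "F k m = (if m = 1 then 1 else 0) + (\<Sum>l\<in>{1..int k}. F k (m - l))"
proof (cases "m \<le> 1")
  case True
  then have "(\<Sum>l\<in>{1..int k}. F k (m - l)) = 0"
    by (intro sum.neutral) (simp add: F_nonpos)
  with True show ?thesis by (auto simp: F_def)
next
  case False
  define p where "p = nat (m - 2)"
  have p: "nat m = Suc (Suc p)" "m = int (Suc (Suc p))" "nat (2 + int p) = Suc (Suc p)"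
    using False by (simp_all add: p_def)
  have "F k m = Fnat k (Suc (Suc p))"
    using False p(1) by (simp add: F_def del: Fnat.simps)
  also have "\<dots> = (\<Sum>j\<in>{1..k}. F k (m - int j))"
    unfolding Fnat.simps
  proof (rule sum.cong[OF refl])
    fix j assume "j \<in> {1..k}"
    show "(if j \<le> Suc (Suc p) then Fnat k (Suc (Suc p) - j) else 0) = F k (m - int j)"
      using p(2,3) by (cases "j = Suc (Suc p)") (auto simp: F_def nat_diff_distrib)
  qed
  also have "\<dots> = (\<Sum>l\<in>{1..int k}. F k (m - l))"
    by (simp add: sum_atLeastAtMost_int)
  finally show ?thesis using False by simp
qed

definition G :: "nat \<Rightarrow> nat \<Rightarrow> int \<Rightarrow> nat" where
  "G k U i = (\<Sum>j\<in>{1..int U}. F k (i - j + 1))"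

lemma G_nonpos: "i \<le> 0 \<Longrightarrow> G k U i = 0"
  unfolding G_def by (intro sum.neutral) (simp add: F_nonpos)

text \<open>Superposing the impulse recurrence of F_k turns the impulse into a block of
  U ones.\<close>
lemma G_rec:
  "G k U i = (if 1 \<le> i \<and> i \<le> int U then 1 else 0) + (\<Sum>l\<in>{1..int k}. G k U (i - l))"
proof -
  have impulses: "(\<Sum>j\<in>{1..int U}. (if i - j + 1 = 1 then 1 else 0::nat))
                  = (if 1 \<le> i \<and> i \<le> int U then 1 else 0)"
  proof -
    have "(\<Sum>j\<in>{1..int U}. (if i - j + 1 = 1 then 1 else 0::nat))
          = (\<Sum>j\<in>{1..int U}. (if j = i then 1 else 0))"
      by (rule sum.cong) auto
    then show ?thesis by simp
  qed
  have "G k U i = (\<Sum>j\<in>{1..int U}. (if i - j + 1 = 1 then 1 else 0)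
                    + (\<Sum>l\<in>{1..int k}. F k (i - j + 1 - l)))"
    unfolding G_def by (rule sum.cong[OF refl], rule F_rec)
  also have "\<dots> = (\<Sum>j\<in>{1..int U}. (if i - j + 1 = 1 then 1 else 0))
                 + (\<Sum>l\<in>{1..int k}. \<Sum>j\<in>{1..int U}. F k (i - l - j + 1))"
    by (simp add: sum.distrib sum.swap[where A = "{1..int U}"] algebra_simps)
  finally show ?thesis
    by (simp add: impulses G_def)
qed

text \<open>The k preceding values of G, with the vanishing ones at non-positive arguments
  dropped, form the window max 1 (i-k), ..., i-1.\<close>
lemma G_window:
  assumes "1 \<le> i"
  shows "(\<Sum>l\<in>{1..int k}. G k U (int i - l)) = (\<Sum>m\<in>{max 1 (i-k)..i-1}. G k U (int m))"
proof -
  have "(\<lambda>l. int i - l) ` {1..int k} = {int i - int k..int i - 1}"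
  proof (rule set_eqI, rule iffI)
    fix x assume "x \<in> {int i - int k..int i - 1}"
    then have "int i - x \<in> {1..int k}" "x = int i - (int i - x)" by auto
    then show "x \<in> (\<lambda>l. int i - l) ` {1..int k}" by blast
  qed auto
  moreover have "inj_on (\<lambda>l. int i - l) {1..int k}"
    by (auto simp: inj_on_def)
  ultimately have "(\<Sum>l\<in>{1..int k}. G k U (int i - l)) = (\<Sum>x\<in>{int i - int k..int i - 1}. G k U x)"
    by (metis (no_types, lifting) sum.reindex_cong)
  also have "\<dots> = (\<Sum>x\<in>{int (max 1 (i-k))..int (i - 1)}. G k U x)"
    by (rule sum.mono_neutral_right) (auto simp: G_nonpos)
  also have "\<dots> = (\<Sum>m\<in>{max 1 (i-k)..i-1}. G k U (int m))"
    by (simp add: image_int_atLeastAtMost[symmetric] sum.reindex)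
  finally show ?thesis .
qed

lemma G_window_rec:
  assumes "1 \<le> i"
  shows "G k U (int i) = (if i \<le> U then 1 else 0) + (\<Sum>m\<in>{max 1 (i-k)..i-1}. G k U (int m))"
  using G_rec[of k U "int i"] G_window[OF assms, of k U] assms by simp

lemma window_recurrence_unique:
  fixes a b c :: "nat \<Rightarrow> nat"
  assumes a: "\<And>i. 1 \<le> i \<Longrightarrow> a i = c i + (\<Sum>m\<in>{max 1 (i-k)..i-1}. a m)"
    and b: "\<And>i. 1 \<le> i \<Longrightarrow> b i = c i + (\<Sum>m\<in>{max 1 (i-k)..i-1}. b m)"
  shows "1 \<le> i \<Longrightarrow> a i = b i"
proof (induction i rule: less_induct)
  case (less i)
  have "(\<Sum>m\<in>{max 1 (i-k)..i-1}. a m) = (\<Sum>m\<in>{max 1 (i-k)..i-1}. b m)"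
    by (rule sum.cong[OF refl]) (use less.IH less.prems in auto)
  then show ?case
    using a[OF less.prems] b[OF less.prems] by simp
qed

text \<open>For k >= U the three-case recurrence of the chunk distribution is a windowed
  recurrence with forcing term [i <= U]; the term n(0) = 1 supplies the forcing.\<close>
lemma peer_count_window_rec:
  fixes n :: "nat \<Rightarrow> nat"
  assumes "k \<ge> U" and "n 0 = 1"
    and first: "\<And>i. 1 \<le> i \<Longrightarrow> i \<le> U \<Longrightarrow> n i = (\<Sum>m\<in>{0..i-1}. n m)"
    and middle: "\<And>i. U < i \<Longrightarrow> i \<le> k \<Longrightarrow> n i = (\<Sum>m\<in>{1..i-1}. n m)"
    and late: "\<And>i. k < i \<Longrightarrow> n i = (\<Sum>m\<in>{i-k..i-1}. n m)"
    and "1 \<le> i"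
  shows "n i = (if i \<le> U then 1 else 0) + (\<Sum>m\<in>{max 1 (i-k)..i-1}. n m)"
proof (cases "i \<le> k")
  case True
  then have window: "max 1 (i-k) = 1" by simp
  show ?thesis
  proof (cases "i \<le> U")
    case True
    have "{0..i-1} = insert 0 {1..i-1}" by auto
    then show ?thesis
      using first[OF \<open>1 \<le> i\<close> True] \<open>n 0 = 1\<close> window True by simp
  next
    case False
    then show ?thesis using middle[of i] \<open>i \<le> k\<close> window by simp
  qed
next
  case False
  then show ?thesis using late[of i] \<open>k \<ge> U\<close> by (simp add: max_def)
qed

lemma S_step: "S k (x + 1) = S k x + F k (x + 1)"
proof (cases "x \<le> 0")
  case True
  then show ?thesis by (cases "x = 0") (auto simp: S_def F_nonpos)
next
  case False
  then have "{1..x+1} = insert (x+1) {1..x}" by auto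
  with False show ?thesis by (simp add: S_def add.commute)
qed

lemma sum_shifted_F: "c \<ge> 0 \<Longrightarrow> (\<Sum>i\<in>{1..t}. F k (int i - c)) = S k (int t - c)"
proof (induction t)
  case 0
  then show ?case by (simp add: S_def)
next
  case (Suc t)
  have "S k (int (Suc t) - c) = S k (int t - c) + F k (int t - c + 1)"
    using S_step[of k "int t - c"] by (simp add: algebra_simps)
  with Suc show ?case by (simp add: algebra_simps)
qed

lemma sum_G: "(\<Sum>i\<in>{1..t}. G k U (int i)) = (\<Sum>j\<in>{1..int U}. S k (int t - j + 1))"
proof -
  have "(\<Sum>i\<in>{1..t}. G k U (int i)) = (\<Sum>j\<in>{1..int U}. \<Sum>i\<in>{1..t}. F k (int i - (j - 1)))"
    unfolding G_def by (subst sum.swap) (simp add: algebra_simps)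
  also have "\<dots> = (\<Sum>j\<in>{1..int U}. S k (int t - (j - 1)))"
    by (rule sum.cong[OF refl]) (rule sum_shifted_F, simp)
  finally show ?thesis by (simp add: algebra_simps)
qed

theorem mainTheorem3:
  fixes U k :: nat and n :: "nat \<Rightarrow> nat"
  assumes "U \<ge> 1" and "k \<ge> U" and "U dvd k"
    and "n 0 = 1"
    and "\<And>i. 1 \<le> i \<Longrightarrow> i \<le> U \<Longrightarrow> n i = (\<Sum>m\<in>{0..i-1}. n m)"
    and "\<And>i. U < i \<Longrightarrow> i \<le> k \<Longrightarrow> n i = (\<Sum>m\<in>{1..i-1}. n m)"
    and "\<And>i. k < i \<Longrightarrow> n i = (\<Sum>m\<in>{i-k..i-1}. n m)"
  shows "(\<forall>i::nat. 1 \<le> i \<longrightarrow> n i = (\<Sum>j\<in>{1..int U}. F k (int i - j + 1)))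
       \<and> (\<forall>t::nat. (\<Sum>i\<in>{1..t}. n i) = (\<Sum>j\<in>{1..int U}. S k (int t - j + 1))
                  \<and> (\<Sum>j\<in>{1..int U}. S k (int t - j + 1)) = Nbar k U (int t))"
proof -
  have n_eq_G: "n i = G k U (int i)" if "1 \<le> i" for i
    using window_recurrence_unique[of n "\<lambda>i. if i \<le> U then 1 else 0" k "\<lambda>i. G k U (int i)"]
      peer_count_window_rec[OF assms(2,4-7)] G_window_rec that
    by blast
  have partial_sums: "(\<Sum>i\<in>{1..t}. n i) = (\<Sum>j\<in>{1..int U}. S k (int t - j + 1))" for t
    using sum_G[of k U t] by (simp add: n_eq_G)
  show ?thesis
    using n_eq_G partial_sums by (simp add: G_def Nbar_def)
qed

end
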